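(* Let $I$ and ${\cal Q}_I$ be as in the context, let $G'$ be a chordal sandwich of $({\rm int^*}({\cal Q}_I),{\rm forb}({\cal Q}_I))$, and let $1\le i\le n$. Then: (a) there is $W\in\{v_i,\overline{v_i}\}$ such that for all $j\in\Delta_i$, the vertex $K^j_W$ is adjacent to $B$ in $G'$; (b) for each $j\in\Delta_i$ and each $W\in\{v_i,\overline{v_i}\}$, if $K^j_W$ is adjacent to $B$ in $G'$, then each of the vertices $S^j_W$, $K^j_W$, and $L^j_W$ (if $L^j_W$ is defined) is adjacent in $G'$ to each of $B$, $A_i$, $H_W$, $H_{\overline W}$, $F^j$.
   Context: Instance: $I$ has variables $v_1,\ldots,v_n$ and clauses ${\cal C}_1,\ldots,{\cal C}_m$; each clause is an ordered triple of literals ${\cal C}_j=X\vee Y\vee Z$ with no variable occurring twice in a clause. Literals are $v_i$ or $\overline{v_i}$; $\overline W$ is the negation of $W$. $\Delta_i$ is the set of $j$ such that $v_i$ or $\overline{v_i}$ occurs in ${\cal C}_j$. Ground set ${\cal X}_I$: $\alpha_{v_i},\alpha_{\overline{v_i}}$; $\beta^j_{v_i},\beta^j_{\overline{v_i}}$ ($j\in\Delta_i$); $\gamma^j_1,\gamma^j_2,\gamma^j_3,\lambda^j$ ($1\le j\le m$); $\delta,\mu$. Sets: $B=\{\mu,\delta\}$, $H_{v_i}=\{\alpha_{v_i},\delta\}$, $H_{\overline{v_i}}=\{\alpha_{\overline{v_i}},\delta\}$, $A_i=\{\alpha_{v_i},\alpha_{\overline{v_i}}\}$, $S^j_{v_i}=\{\alpha_{v_i},\beta^j_{v_i}\}$,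 $S^j_{\overline{v_i}}=\{\alpha_{\overline{v_i}},\beta^j_{\overline{v_i}}\}$ ($j\in\Delta_i$); for ${\cal C}_j=X\vee Y\vee Z$: $K^j_{\overline X}=\{\beta^j_X,\gamma^j_1\}$, $K^j_{\overline Y}=\{\beta^j_Y,\gamma^j_2\}$, $K^j_{\overline Z}=\{\beta^j_Z,\gamma^j_3\}$, $K^j_X=\{\beta^j_{\overline X},\lambda^j\}$, $K^j_Y=\{\beta^j_{\overline Y},\lambda^j\}$, $K^j_Z=\{\beta^j_{\overline Z},\lambda^j\}$, $L^j_X=\{\beta^j_{\overline X},\gamma^j_2\}$, $L^j_Y=\{\beta^j_{\overline Y},\gamma^j_3\}$, $L^j_Z=\{\beta^j_{\overline Z},\gamma^j_1\}$ (so $L^j_W$ is defined only for the three literals $W$ occurring in ${\cal C}_j$), $D^j_p=\{\gamma^j_p,\lambda^j\}$, $F^j=\{\lambda^j,\mu\}$. Objects indexed by a literal mean the one for that literal. ${\cal Q}_I$ is the collection of partial splits: $A_i|B$; $D^j_p|B$ ($p=1,2,3$); $S^j_{v_i}|S^{j'}_{\overline{v_i}}$ ($j,j'\in\Delta_i$); $S^j_{v_i}|K^{j'}_{\overline{v_i}}$, $S^j_{\overline{v_i}}|K^{j'}_{v_i}$ ($j<j'$ in $\Delta_i$); $K^j_{\overline{v_i}}|F^{j'}$, $K^j_{v_i}|F^{j'}$ ($j\in\Delta_i$, $j<j'\le m$); $H_{v_{i'}}|S^j_{v_i}$, $H_{\overline{v_{i'}}}|S^j_{v_i}$, $H_{v_{i'}}|S^j_{\overline{v_i}}$,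 $H_{\overline{v_{i'}}}|S^j_{\overline{v_i}}$ ($1\le i'<i\le n$, $j\in\Delta_i$); $H_{\overline{v_i}}|F^j$, $H_{v_i}|F^j$ (all $i,j$); for each ${\cal C}_j=X\vee Y\vee Z$: $K^j_{\overline X}|K^j_X$, $K^j_{\overline Y}|K^j_Y$, $K^j_{\overline Z}|K^j_Z$, $K^j_{\overline X}|L^j_X$, $K^j_{\overline Y}|L^j_Y$, $K^j_{\overline Z}|L^j_Z$, $S^j_Y|K^j_X$, $S^j_Z|K^j_Y$, $S^j_X|K^j_Z$, $S^j_Z|L^j_X$, $S^j_X|L^j_Y$, $S^j_Y|L^j_Z$. ${\rm int^*}({\cal Q}_I)$: vertices are the 2-sets occurring as cells of members of ${\cal Q}_I$, adjacent iff they intersect. ${\rm forb}({\cal Q}_I)$: same vertices, $P,P'$ adjacent iff $P|P'\in{\cal Q}_I$. A chordal sandwich of $(G_1,G_2)$ (edge-disjoint, same vertex set) is a chordal graph (no induced cycle of length $\ge4$) on that vertex set containing all edges of $G_1$ and none of $G_2$. *)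

theory Defs
  imports Main
begin

text \<open>Literals: (i, True) is v_i, (i, False) is the negation of v_i.
  A clause is an ordered triple of literals; an instance is given by
  n, m and a map cl from clause indices 1..m to triples.\<close>

type_synonym lit = "nat \<times> bool"

definition neg :: "lit \<Rightarrow> lit" where
  "neg w = (fst w, \<not> snd w)"

definition pos :: "nat \<Rightarrow> lit" where "pos i = (i, True)"
definition ng :: "nat \<Rightarrow> lit" where "ng i = (i, False)"

type_synonym clauses = "nat \<Rightarrow> lit \<times> lit \<times> lit"

definition cX :: "clauses \<Rightarrow> nat \<Rightarrow> lit" where "cX cl j = fst (cl j)"
definition cY :: "clauses \<Rightarrow> nat \<Rightarrow> lit" where "cY cl j = fst (snd (cl j))"
definition cZ :: "clauses \<Rightarrow> nat \<Rightarrow> lit" where "cZ cl j = snd (snd (cl j))"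

definition wf_instance :: "nat \<Rightarrow> nat \<Rightarrow> clauses \<Rightarrow> bool" where
  "wf_instance n m cl \<longleftrightarrow> (\<forall>j\<in>{1..m}.
      fst (cX cl j) \<in> {1..n} \<and> fst (cY cl j) \<in> {1..n} \<and> fst (cZ cl j) \<in> {1..n} \<and>
      fst (cX cl j) \<noteq> fst (cY cl j) \<and> fst (cX cl j) \<noteq> fst (cZ cl j) \<and>
      fst (cY cl j) \<noteq> fst (cZ cl j))"

definition Dl :: "nat \<Rightarrow> clauses \<Rightarrow> nat \<Rightarrow> nat set" where
  "Dl m cl i = {j\<in>{1..m}. fst (cX cl j) = i \<or> fst (cY cl j) = i \<or> fst (cZ cl j) = i}"

datatype elem = EAlpha lit | EBeta nat lit | EGamma nat nat | ELambda nat | EDelta | EMu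

definition B :: "elem set" where "B = {EMu, EDelta}"
definition H :: "lit \<Rightarrow> elem set" where "H w = {EAlpha w, EDelta}"
definition A :: "nat \<Rightarrow> elem set" where "A i = {EAlpha (pos i), EAlpha (ng i)}"
definition S :: "nat \<Rightarrow> lit \<Rightarrow> elem set" where "S j w = {EAlpha w, EBeta j w}"

text \<open>K^j_W, defined for the six literals W, neg W with W in clause j
  (the empty set elsewhere, never used).\<close>
definition K :: "clauses \<Rightarrow> nat \<Rightarrow> lit \<Rightarrow> elem set" where
  "K cl j w =
    (if w = neg (cX cl j) then {EBeta j (cX cl j), EGamma j 1}
     else if w = neg (cY cl j) then {EBeta j (cY cl j), EGamma j 2}
     else if w = neg (cZ cl j) then {EBeta j (cZ cl j), EGamma j 3}
     else if w = cX cl j then {EBeta j (neg (cX cl j)), ELambda j}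
     else if w = cY cl j then {EBeta j (neg (cY cl j)), ELambda j}
     else if w = cZ cl j then {EBeta j (neg (cZ cl j)), ELambda j}
     else {})"

text \<open>L^j_W, defined only for the three literals W occurring in clause j.\<close>
definition in_clause :: "clauses \<Rightarrow> nat \<Rightarrow> lit \<Rightarrow> bool" where
  "in_clause cl j w \<longleftrightarrow> w = cX cl j \<or> w = cY cl j \<or> w = cZ cl j"

definition L :: "clauses \<Rightarrow> nat \<Rightarrow> lit \<Rightarrow> elem set" where
  "L cl j w =
    (if w = cX cl j then {EBeta j (neg (cX cl j)), EGamma j 2}
     else if w = cY cl j then {EBeta j (neg (cY cl j)), EGamma j 3}
     else if w = cZ cl j then {EBeta j (neg (cZ cl j)), EGamma j 1}
     else {})"

definition D :: "nat \<Rightarrow> nat \<Rightarrow> elem set" where "D j p = {EGamma j p, ELambda j}"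
definition F :: "nat \<Rightarrow> elem set" where "F j = {ELambda j, EMu}"

text \<open>Partial splits P|P' are represented as pairs (P, P').\<close>
definition clause_splits :: "clauses \<Rightarrow> nat \<Rightarrow> (elem set \<times> elem set) set" where
  "clause_splits cl j = (let X = cX cl j; Y = cY cl j; Z = cZ cl j in
     {(K cl j (neg X), K cl j X), (K cl j (neg Y), K cl j Y), (K cl j (neg Z), K cl j Z),
      (K cl j (neg X), L cl j X), (K cl j (neg Y), L cl j Y), (K cl j (neg Z), L cl j Z),
      (S j Y, K cl j X), (S j Z, K cl j Y), (S j X, K cl j Z),
      (S j Z, L cl j X), (S j X, L cl j Y), (S j Y, L cl j Z)})"

definition QI :: "nat \<Rightarrow> nat \<Rightarrow> clauses \<Rightarrow> (elem set \<times> elem set) set" where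
  "QI n m cl =
     {(A i, B) | i. i \<in> {1..n}}
   \<union> {(D j p, B) | j p. j \<in> {1..m} \<and> p \<in> {1,2,3}}
   \<union> {(S j (pos i), S j' (ng i)) | i j j'. i \<in> {1..n} \<and> j \<in> Dl m cl i \<and> j' \<in> Dl m cl i}
   \<union> {(S j (pos i), K cl j' (ng i)) | i j j'. i \<in> {1..n} \<and> j \<in> Dl m cl i \<and> j' \<in> Dl m cl i \<and> j < j'}
   \<union> {(S j (ng i), K cl j' (pos i)) | i j j'. i \<in> {1..n} \<and> j \<in> Dl m cl i \<and> j' \<in> Dl m cl i \<and> j < j'}
   \<union> {(K cl j (ng i), F j') | i j j'. i \<in> {1..n} \<and> j \<in> Dl m cl i \<and> j < j' \<and> j' \<le> m}
   \<union> {(K cl j (pos i), F j') | i j j'. i \<in> {1..n} \<and> j \<in> Dl m cl i \<and> j < j' \<and> j' \<le> m}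
   \<union> {(H w', S j w) | w' w j. 1 \<le> fst w' \<and> fst w' < fst w \<and> fst w \<le> n \<and> j \<in> Dl m cl (fst w)}
   \<union> {(H w, F j) | w j. fst w \<in> {1..n} \<and> j \<in> {1..m}}
   \<union> (\<Union>j\<in>{1..m}. clause_splits cl j)"

definition vtx :: "(elem set \<times> elem set) set \<Rightarrow> elem set set" where
  "vtx Q = {P. \<exists>P'. (P, P') \<in> Q \<or> (P', P) \<in> Q}"

definition int_star :: "(elem set \<times> elem set) set \<Rightarrow> (elem set \<times> elem set) set" where
  "int_star Q = {(P, P'). P \<in> vtx Q \<and> P' \<in> vtx Q \<and> P \<noteq> P' \<and> P \<inter> P' \<noteq> {}}"

definition forb :: "(elem set \<times> elem set) set \<Rightarrow> (elem set \<times> elem set) set" where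
  "forb Q = {(P, P'). (P, P') \<in> Q \<or> (P', P) \<in> Q}"

definition graph_on :: "'a set \<Rightarrow> ('a \<times> 'a) set \<Rightarrow> bool" where
  "graph_on V E \<longleftrightarrow> E \<subseteq> V \<times> V \<and> sym E \<and> irrefl E"

definition induced_cycle :: "('a \<times> 'a) set \<Rightarrow> 'a list \<Rightarrow> bool" where
  "induced_cycle E cs \<longleftrightarrow> distinct cs \<and>
     (\<forall>a < length cs. \<forall>b < length cs. a \<noteq> b \<longrightarrow>
        ((cs ! a, cs ! b) \<in> E \<longleftrightarrow> (b = Suc a mod length cs \<or> a = Suc b mod length cs)))"

definition chordal :: "'a set \<Rightarrow> ('a \<times> 'a) set \<Rightarrow> bool" where
  "chordal V E \<longleftrightarrow> graph_on V E \<and>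
     \<not> (\<exists>cs. set cs \<subseteq> V \<and> length cs \<ge> 4 \<and> induced_cycle E cs)"

definition chordal_sandwich :: "'a set \<Rightarrow> ('a \<times> 'a) set \<Rightarrow> ('a \<times> 'a) set \<Rightarrow> ('a \<times> 'a) set \<Rightarrow> bool" where
  "chordal_sandwich V E1 E2 G \<longleftrightarrow> chordal V G \<and> E1 \<subseteq> G \<and> G \<inter> E2 = {}"

end

theory Submission
  imports Defs
begin

text \<open>In a chordal graph, two nonadjacent common neighbours of a vertex x cannot be joined by a
  path avoiding the closed neighbourhood of x: a shortest such path would close an induced cycle
  through x of length at least four. Applied repeatedly inside the twelve vertices that clause j
  and the variable v_i contribute to G', this shows that S^j_{neg W} is adjacent to B whenever
  K^j_W is not, and that K^j_W adjacent to B forces S^j_W, K^j_W and L^j_W to be adjacent to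
  B, A_i, H_W, H_{neg W} and F^j. Since S^j_{v_i} and S^{j'}_{neg v_i} are nonadjacent common
  neighbours of A_i, they are not both adjacent to B, so a single literal W works for every j.\<close>

abbreviation walk :: "('a \<times> 'a) set \<Rightarrow> 'a list \<Rightarrow> bool" where
  "walk E \<equiv> successively (\<lambda>u v. (u, v) \<in> E)"

definition induced_path :: "('a \<times> 'a) set \<Rightarrow> 'a list \<Rightarrow> bool" where
  "induced_path E ps \<longleftrightarrow> distinct ps \<and>
     (\<forall>k < length ps. \<forall>l < length ps. (ps ! k, ps ! l) \<in> E \<longleftrightarrow> l = Suc k \<or> k = Suc l)"

lemma walk_take_drop:
  assumes "walk E ps" "0 < k" "k < length ps" "l < length ps" "(ps ! (k - 1), ps ! l) \<in> E"
  shows "walk E (take k ps @ drop l ps)"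
proof -
  have "walk E (take k ps)" "walk E (drop l ps)"
    using assms(1) successively_append_iff[of _ "take k ps" "drop k ps"]
      successively_append_iff[of _ "take l ps" "drop l ps"] by auto
  moreover have "last (take k ps) = ps ! (k - 1)"
    using assms(2-4) by (cases k) (simp_all add: take_Suc_conv_app_nth)
  moreover have "hd (drop l ps) = ps ! l"
    using assms(4) by (simp add: hd_drop_conv_nth)
  ultimately show ?thesis
    using assms by (simp add: successively_append_iff)
qed

lemma walk_contains_induced_path:
  assumes "sym E" "irrefl E" "walk E ps" "ps \<noteq> []"
  shows "\<exists>qs. induced_path E qs \<and> qs \<noteq> [] \<and> hd qs = hd ps \<and> last qs = last ps
    \<and> set qs \<subseteq> set ps"
  using assms(3,4)
proof (induction ps rule: length_induct)
  case (1 ps)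
  have shorten: ?case
    if cut: "k < l" "l < length ps" "walk E (take k ps @ drop l ps)" "k = 0 \<Longrightarrow> ps ! l = hd ps"
    for k l
  proof -
    let ?ys = "take k ps @ drop l ps"
    have "length ?ys < length ps" "?ys \<noteq> []"
      using cut(1,2) by auto
    then obtain qs where qs: "induced_path E qs" "qs \<noteq> []" "hd qs = hd ?ys" "last qs = last ?ys"
      "set qs \<subseteq> set ?ys"
      using "1.IH" cut(3) by blast
    moreover have "hd ?ys = hd ps"
      using cut(1,2,4) by (cases k) (auto simp: hd_drop_conv_nth hd_append)
    moreover have "last ?ys = last ps" "set ?ys \<subseteq> set ps"
      using cut(1,2) set_take_subset[of k ps] set_drop_subset[of l ps] by auto
    ultimately show ?thesis
      by auto
  qed
  show ?case
  proof (cases "\<exists>k l. k < l \<and> l < length ps \<and> ps ! k = ps ! l")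
    case True
    then obtain k l where kl: "k < l" "l < length ps" "ps ! k = ps ! l" by blast
    show ?thesis
    proof (cases "k = 0")
      case True
      have "walk E (drop l ps)"
        using "1.prems"(1) successively_append_iff[of _ "take l ps" "drop l ps"] by simp
      moreover have "ps ! l = hd ps"
        using kl True "1.prems"(2) by (simp add: hd_conv_nth)
      ultimately show ?thesis
        using shorten[OF kl(1,2)] True by simp
    next
      case False
      have "(ps ! (k - 1), ps ! l) \<in> E"
        using successively_nth[OF "1.prems"(1), of "k - 1"] kl False by simp
      then show ?thesis
        using shorten[OF kl(1,2)] walk_take_drop[OF "1.prems"(1), of k l] kl False by simp
    qed
  next
    case no_repetition: False
    show ?thesis
    proof (cases "\<exists>k l. Suc k < l \<and> l < length ps \<and> (ps ! k, ps ! l) \<in> E")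
      case True
      then obtain k l where kl: "Suc k < l" "l < length ps" "(ps ! k, ps ! l) \<in> E" by blast
      then show ?thesis
        using shorten[of "Suc k" l] walk_take_drop[OF "1.prems"(1), of "Suc k" l] by simp
    next
      case False
      have "distinct ps"
        unfolding distinct_conv_nth using no_repetition by (metis linorder_neqE_nat)
      moreover have "(ps ! k, ps ! l) \<in> E \<longleftrightarrow> l = Suc k \<or> k = Suc l"
        if "k < length ps" "l < length ps" for k l
      proof
        assume edge: "(ps ! k, ps ! l) \<in> E"
        then have "(ps ! l, ps ! k) \<in> E" "k \<noteq> l"
          using assms(1,2) by (auto simp: irrefl_def dest: symD)
        then show "l = Suc k \<or> k = Suc l"
          using False edge that by (metis Suc_lessI linorder_neqE_nat)
      next
        assume "l = Suc k \<or> k = Suc l"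
        then show "(ps ! k, ps ! l) \<in> E"
          using successively_nth[OF "1.prems"(1)] that assms(1) by (auto dest: symD)
      qed
      ultimately show ?thesis
        using "1.prems"(2) unfolding induced_path_def by blast
    qed
  qed
qed

lemma induced_cycle_Cons:
  assumes "sym E" "induced_path E ps" "3 \<le> length ps" "x \<notin> set ps"
    and adj: "\<And>k. k < length ps \<Longrightarrow> (x, ps ! k) \<in> E \<longleftrightarrow> k = 0 \<or> k = length ps - 1"
  shows "induced_cycle E (x # ps)"
  unfolding induced_cycle_def
proof (intro conjI allI impI)
  show "distinct (x # ps)"
    using assms(2,4) by (simp add: induced_path_def)
  fix p q
  assume pq: "p < length (x # ps)" "q < length (x # ps)" "p \<noteq> q"
  let ?N = "length ps"
  have wrap: "Suc r mod Suc ?N = (if r = ?N then 0 else Suc r)" if "r < Suc ?N" for r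
    using that by (simp add: mod_Suc)
  have path: "(ps ! k, ps ! l) \<in> E \<longleftrightarrow> l = Suc k \<or> k = Suc l" if "k < ?N" "l < ?N" for k l
    using assms(2) that by (simp add: induced_path_def)
  have adj': "(ps ! k, x) \<in> E \<longleftrightarrow> k = 0 \<or> k = ?N - 1" if "k < ?N" for k
    using adj[OF that] assms(1) by (auto dest: symD)
  show "((x # ps) ! p, (x # ps) ! q) \<in> E \<longleftrightarrow>
    q = Suc p mod length (x # ps) \<or> p = Suc q mod length (x # ps)"
    using pq assms(3) wrap[of p] wrap[of q]
    by (cases p; cases q) (auto simp: adj adj' path)
qed

lemma chordal_adjacent_if_path_avoids_neighbourhood:
  assumes chordal: "chordal V G"
    and x: "x \<in> V" "(x, a) \<in> G" "(x, b) \<in> G" "a \<noteq> b"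
    and path: "walk G (a # ps @ [b])" "set (a # ps @ [b]) \<subseteq> V"
    and avoids: "\<forall>v \<in> set ps. (x, v) \<notin> G \<and> v \<noteq> x"
  shows "(a, b) \<in> G"
proof (rule ccontr)
  assume not_ab: "(a, b) \<notin> G"
  have "sym G" "irrefl G"
    using chordal by (simp_all add: chordal_def graph_on_def)
  then obtain qs where qs: "induced_path G qs" "qs \<noteq> []" "hd qs = a" "last qs = b"
    "set qs \<subseteq> set (a # ps @ [b])"
    using walk_contains_induced_path[OF _ _ path(1)] by fastforce
  let ?N = "length qs"
  have ends: "qs ! 0 = a" "qs ! (?N - 1) = b"
    using qs(2-4) by (simp_all add: hd_conv_nth last_conv_nth)
  have "?N \<noteq> 1"
    using ends x(4) by auto
  moreover have "?N \<noteq> 2"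
  proof
    assume "?N = 2"
    then have "(qs ! 0, qs ! 1) \<in> G"
      using qs(1) unfolding induced_path_def by auto
    then show False
      using ends not_ab \<open>?N = 2\<close> by simp
  qed
  ultimately have long: "3 \<le> ?N"
    using qs(2) by (cases ?N) auto
  have "x \<noteq> a" "x \<noteq> b"
    using x(2,3) \<open>irrefl G\<close> by (auto simp: irrefl_def)
  then have "x \<notin> set qs"
    using avoids qs(5) by auto
  moreover have "(x, qs ! k) \<in> G \<longleftrightarrow> k = 0 \<or> k = ?N - 1" if "k < ?N" for k
  proof (cases "k = 0 \<or> k = ?N - 1")
    case False
    have "distinct qs"
      using qs(1) by (simp add: induced_path_def)
    moreover have "0 < ?N" "?N - 1 < ?N"
      using that by auto
    ultimately have "qs ! k \<noteq> qs ! 0" "qs ! k \<noteq> qs ! (?N - 1)"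
      using that False by (simp_all add: nth_eq_iff_index_eq)
    moreover have "qs ! k \<in> set (a # ps @ [b])"
      using qs(5) nth_mem[OF that] by blast
    ultimately show ?thesis
      using avoids False ends by auto
  qed (use ends x(2,3) in metis)
  ultimately have "induced_cycle G (x # qs)"
    by (rule induced_cycle_Cons[OF \<open>sym G\<close> qs(1) long])
  moreover have "set (x # qs) \<subseteq> V"
    using x(1) qs(5) path(2) by auto
  moreover have "4 \<le> length (x # qs)"
    using long by simp
  ultimately show False
    using chordal unfolding chordal_def by blast
qed

text \<open>The part of G' induced by clause j and a variable v_i occurring in it, in the order
  B, F^j, D^j_p, D^j_q, A_i, H_W, H_{neg W}, S^j_W, S^j_{neg W}, K^j_W, K^j_{neg W}, L^j_W,
  where W is the literal of v_i in clause j, K^j_{neg W} = {beta^j_W, gamma^j_p} and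
  L^j_W = {beta^j_{neg W}, gamma^j_q}. The edges are intersecting cells, the non-edges are
  partial splits of Q_I.\<close>

locale clause_gadget =
  fixes V :: "'a set" and G :: "('a \<times> 'a) set"
    and b f d d' a h h' s s' k k' l :: 'a
  assumes chordal: "chordal V G"
    and vertices: "{b, f, d, d', a, h, h', s, s', k, k', l} \<subseteq> V"
    and distinct: "distinct [b, f, d, d', a, h, h', s, s', k, k', l]"
    and edges: "(b, h) \<in> G" "(b, h') \<in> G" "(b, f) \<in> G" "(h, a) \<in> G" "(h', a) \<in> G"
      "(h, s) \<in> G" "(h', s') \<in> G" "(a, s) \<in> G" "(a, s') \<in> G" "(s, k') \<in> G" "(s', k) \<in> G"
      "(s', l) \<in> G" "(k, f) \<in> G" "(k, d) \<in> G" "(k', d) \<in> G" "(f, d) \<in> G" "(l, d') \<in> G"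
      "(f, d') \<in> G"
    and non_edges: "(a, b) \<notin> G" "(d, b) \<notin> G" "(d', b) \<notin> G" "(h, f) \<notin> G" "(h', f) \<notin> G"
      "(s, s') \<notin> G" "(k', k) \<notin> G"
begin

lemma adjacent_sym: "(u, v) \<in> G \<Longrightarrow> (v, u) \<in> G"
  using chordal unfolding chordal_def graph_on_def by (auto dest: symD)

lemma not_adjacent_sym: "(u, v) \<notin> G \<Longrightarrow> (v, u) \<notin> G"
  using adjacent_sym by blast

lemmas adjacent = edges edges[THEN adjacent_sym]
lemmas not_adjacent = non_edges non_edges[THEN not_adjacent_sym]
lemmas vertices_neq = distinct[simplified] distinct_rev[THEN iffD2, OF distinct, simplified]
lemmas in_V = vertices[simplified]
lemmas gadget_facts = in_V adjacent not_adjacent vertices_neq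
lemmas adjacent_if_path_avoids = chordal_adjacent_if_path_avoids_neighbourhood[OF chordal]

lemma k_b_excludes_k'_b:
  assumes "(k, b) \<in> G" shows "(k', b) \<notin> G"
proof
  assume "(k', b) \<in> G"
  then have "(k, k') \<in> G"
    using adjacent_if_path_avoids[of d k k' "[b]"] assms adjacent_sym by (simp add: gadget_facts)
  then show False
    using not_adjacent by simp
qed

lemma s_b_excludes_s'_b:
  assumes "(s, b) \<in> G" shows "(s', b) \<notin> G"
proof
  assume "(s', b) \<in> G"
  then have "(s, s') \<in> G"
    using adjacent_if_path_avoids[of a s s' "[b]"] assms adjacent_sym by (simp add: gadget_facts)
  then show False
    using not_adjacent by simp
qed

lemma s'_b_if_not_k_b:
  assumes "(k, b) \<notin> G" shows "(s', b) \<in> G"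
proof (rule ccontr)
  assume "(s', b) \<notin> G"
  then have "(h', f) \<in> G"
    using adjacent_if_path_avoids[of b h' f "[s', k]"] assms \<open>(s', b) \<notin> G\<close> not_adjacent_sym
    by (simp add: gadget_facts)
  then show False
    using not_adjacent by simp
qed

lemma s_b_if_not_k'_b:
  assumes "(k', b) \<notin> G" shows "(s, b) \<in> G"
proof (rule ccontr)
  assume "(s, b) \<notin> G"
  then have "(h, f) \<in> G"
    using adjacent_if_path_avoids[of b h f "[s, k', d]"] assms \<open>(s, b) \<notin> G\<close> not_adjacent_sym
    by (simp add: gadget_facts)
  then show False
    using not_adjacent by simp
qed

lemma neighbours_if_k_b:
  assumes kb: "(k, b) \<in> G"
  shows "\<forall>P \<in> {s, k, l}. \<forall>R \<in> {b, a, h, h', f}. (P, R) \<in> G"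
proof -
  have sb: "(s, b) \<in> G"
    using s_b_if_not_k'_b k_b_excludes_k'_b kb by blast
  have s'b: "(s', b) \<notin> G" "(b, s') \<notin> G"
    using s_b_excludes_s'_b sb not_adjacent_sym by blast+
  have k'b: "(b, k') \<notin> G"
    using k_b_excludes_k'_b kb not_adjacent_sym by blast
  note known = kb kb[THEN adjacent_sym] sb sb[THEN adjacent_sym] s'b k'b
  have lb: "(l, b) \<in> G"
  proof (rule ccontr)
    assume "(l, b) \<notin> G"
    then have "(h', f) \<in> G"
      using adjacent_if_path_avoids[of b h' f "[s', l, d']"] known not_adjacent_sym
      by (simp add: gadget_facts)
    then show False
      using not_adjacent by simp
  qed
  note known = known lb lb[THEN adjacent_sym]
  have "(s, h') \<in> G"
  proof (rule ccontr)
    assume "(s, h') \<notin> G"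
    then have "(a, b) \<in> G"
      using adjacent_if_path_avoids[of h' a b "[s]"] known not_adjacent_sym
      by (simp add: gadget_facts)
    then show False
      using not_adjacent by simp
  qed
  moreover have "(s, f) \<in> G"
    using adjacent_if_path_avoids[of b s f "[k', d]"] known by (simp add: gadget_facts)
  moreover have "(k, h') \<in> G" "(l, h') \<in> G"
    using adjacent_if_path_avoids[of b k h' "[s']"] adjacent_if_path_avoids[of b l h' "[s']"] known
    by (simp_all add: gadget_facts)
  moreover have "(k, h) \<in> G" "(l, h) \<in> G"
    using adjacent_if_path_avoids[of b k h "[s', a]"] adjacent_if_path_avoids[of b l h "[s', a]"] known
    by (simp_all add: gadget_facts)
  moreover have "(a, k) \<in> G" "(a, l) \<in> G"
    using adjacent_if_path_avoids[of s' a k "[s, b]"] adjacent_if_path_avoids[of s' a l "[s, b]"] known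
    by (simp_all add: gadget_facts)
  moreover have "(l, f) \<in> G"
    using adjacent_if_path_avoids[of b l f "[d']"] known by (simp add: gadget_facts)
  ultimately show ?thesis
    using known adjacent adjacent_sym by auto
qed

lemma neighbours_if_k'_b:
  assumes k'b: "(k', b) \<in> G"
  shows "\<forall>P \<in> {s', k'}. \<forall>R \<in> {b, a, h', h, f}. (P, R) \<in> G"
proof -
  have s'b: "(s', b) \<in> G"
    using s'_b_if_not_k_b k_b_excludes_k'_b k'b by blast
  have sb: "(s, b) \<notin> G" "(b, s) \<notin> G"
    using s_b_excludes_s'_b s'b not_adjacent_sym by blast+
  have kb: "(b, k) \<notin> G"
    using k_b_excludes_k'_b k'b not_adjacent_sym by blast
  note known = k'b k'b[THEN adjacent_sym] s'b s'b[THEN adjacent_sym] sb kb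
  have "(k', f) \<in> G"
  proof (rule ccontr)
    assume "(k', f) \<notin> G"
    then have "(b, d) \<in> G"
      using adjacent_if_path_avoids[of f b d "[k']"] known not_adjacent_sym
      by (simp add: gadget_facts)
    then show False
      using not_adjacent by simp
  qed
  moreover have "(s', h) \<in> G"
  proof (rule ccontr)
    assume "(s', h) \<notin> G"
    then have "(a, b) \<in> G"
      using adjacent_if_path_avoids[of h a b "[s']"] known not_adjacent_sym
      by (simp add: gadget_facts)
    then show False
      using not_adjacent by simp
  qed
  moreover have "(k', h) \<in> G"
    using adjacent_if_path_avoids[of b k' h "[s]"] known by (simp add: gadget_facts)
  moreover have "(k', h') \<in> G"
    using adjacent_if_path_avoids[of b k' h' "[s, a]"] known by (simp add: gadget_facts)
  moreover have "(a, k') \<in> G"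
    using adjacent_if_path_avoids[of s a k' "[s', b]"] known by (simp add: gadget_facts)
  moreover have "(s', f) \<in> G"
    using adjacent_if_path_avoids[of b s' f "[k]"] known by (simp add: gadget_facts)
  ultimately show ?thesis
    using known adjacent adjacent_sym by auto
qed

end

lemma A_B_in_QI:
  assumes "i \<in> {1..n}" shows "(A i, B) \<in> QI n m cl"
proof -
  have "(A i, B) \<in> {(A i, B) | i. i \<in> {1..n}}"
    using assms by blast
  then show ?thesis
    unfolding QI_def by (intro UnI1)
qed

lemma D_B_in_QI:
  assumes "j \<in> {1..m}" "p \<in> {1, 2, 3}" shows "(D j p, B) \<in> QI n m cl"
proof -
  have "(D j p, B) \<in> {(D j p, B) | j p. j \<in> {1..m} \<and> p \<in> {1, 2, 3}}"
    using assms by blast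
  then show ?thesis
    unfolding QI_def by (intro UnI1 UnI2)
qed

lemma S_S_in_QI:
  assumes "i \<in> {1..n}" "j \<in> Dl m cl i" "j' \<in> Dl m cl i"
  shows "(S j (pos i), S j' (ng i)) \<in> QI n m cl"
proof -
  have "(S j (pos i), S j' (ng i)) \<in>
      {(S j (pos i), S j' (ng i)) | i j j'. i \<in> {1..n} \<and> j \<in> Dl m cl i \<and> j' \<in> Dl m cl i}"
    using assms by blast
  then show ?thesis
    unfolding QI_def by (intro UnI1 UnI2)
qed

lemma H_F_in_QI:
  assumes "fst w \<in> {1..n}" "j \<in> {1..m}" shows "(H w, F j) \<in> QI n m cl"
proof -
  have "(H w, F j) \<in> {(H w, F j) | w j. fst w \<in> {1..n} \<and> j \<in> {1..m}}"
    using assms by blast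
  then show ?thesis
    unfolding QI_def by (intro UnI1 UnI2)
qed

lemma clause_splits_in_QI:
  assumes "j \<in> {1..m}" "x \<in> clause_splits cl j" shows "x \<in> QI n m cl"
proof -
  have "x \<in> (\<Union>j\<in>{1..m}. clause_splits cl j)"
    using assms by blast
  then show ?thesis
    unfolding QI_def by (intro UnI2)
qed

lemma split_cells_in_vtx: "(P, P') \<in> Q \<Longrightarrow> P \<in> vtx Q \<and> P' \<in> vtx Q"
  unfolding vtx_def by blast

lemma sandwich_adjacent:
  assumes "chordal_sandwich (vtx Q) (int_star Q) (forb Q) G"
    and "P \<in> vtx Q" "P' \<in> vtx Q" "P \<noteq> P'" "P \<inter> P' \<noteq> {}"
  shows "(P, P') \<in> G"
  using assms unfolding chordal_sandwich_def int_star_def by blast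

lemma sandwich_not_adjacent:
  assumes "chordal_sandwich (vtx Q) (int_star Q) (forb Q) G" "(P, P') \<in> Q \<or> (P', P) \<in> Q"
  shows "(P, P') \<notin> G"
  using assms unfolding chordal_sandwich_def forb_def by blast

lemma clause_occurrence:
  assumes wf: "wf_instance n m cl" and j: "j \<in> Dl m cl i"
  obtains t p q where "in_clause cl j (i, t)" "\<not> in_clause cl j (i, \<not> t)"
    "p \<in> {1, 2, 3}" "q \<in> {1, 2, 3}" "p \<noteq> q"
    "K cl j (i, \<not> t) = {EBeta j (i, t), EGamma j p}"
    "K cl j (i, t) = {EBeta j (i, \<not> t), ELambda j}"
    "L cl j (i, t) = {EBeta j (i, \<not> t), EGamma j q}"
    "(K cl j (i, \<not> t), K cl j (i, t)) \<in> clause_splits cl j"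
    "(K cl j (i, \<not> t), L cl j (i, t)) \<in> clause_splits cl j"
proof -
  have jm: "j \<in> {1..m}" and occurs: "fst (cX cl j) = i \<or> fst (cY cl j) = i \<or> fst (cZ cl j) = i"
    using j unfolding Dl_def by auto
  obtain x1 x2 y1 y2 z1 z2 where xyz: "cX cl j = (x1, x2)" "cY cl j = (y1, y2)" "cZ cl j = (z1, z2)"
    by (metis prod.exhaust)
  have distinct: "x1 \<noteq> y1" "x1 \<noteq> z1" "y1 \<noteq> z1"
    using wf jm xyz unfolding wf_instance_def by force+
  note simps = xyz in_clause_def K_def L_def neg_def clause_splits_def Let_def
  from occurs show ?thesis
  proof (elim disjE)
    assume "fst (cX cl j) = i"
    then show ?thesis
      using distinct by (intro that[of x2 1 2]) (auto simp: simps)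
  next
    assume "fst (cY cl j) = i"
    then show ?thesis
      using distinct by (intro that[of y2 2 3]) (auto simp: simps)
  next
    assume "fst (cZ cl j) = i"
    then show ?thesis
      using distinct by (intro that[of z2 3 1]) (auto simp: simps)
  qed
qed

lemma clause_gadget_at:
  assumes wf: "wf_instance n m cl"
    and sandwich: "chordal_sandwich (vtx (QI n m cl)) (int_star (QI n m cl)) (forb (QI n m cl)) G"
    and i: "i \<in> {1..n}" and j: "j \<in> Dl m cl i"
  obtains t p q where "in_clause cl j (i, t)" "\<not> in_clause cl j (i, \<not> t)"
    "clause_gadget (vtx (QI n m cl)) G B (F j) (D j p) (D j q) (A i) (H (i, t)) (H (i, \<not> t))
       (S j (i, t)) (S j (i, \<not> t)) (K cl j (i, t)) (K cl j (i, \<not> t)) (L cl j (i, t))"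
proof -
  obtain t p q where occ: "in_clause cl j (i, t)" "\<not> in_clause cl j (i, \<not> t)"
    "p \<in> {1, 2, 3}" "q \<in> {1, 2, 3}" "p \<noteq> q"
    "K cl j (i, \<not> t) = {EBeta j (i, t), EGamma j p}"
    "K cl j (i, t) = {EBeta j (i, \<not> t), ELambda j}"
    "L cl j (i, t) = {EBeta j (i, \<not> t), EGamma j q}"
    "(K cl j (i, \<not> t), K cl j (i, t)) \<in> clause_splits cl j"
    "(K cl j (i, \<not> t), L cl j (i, t)) \<in> clause_splits cl j"
    using clause_occurrence[OF wf j] by blast
  define Q where "Q = QI n m cl"
  have jm: "j \<in> {1..m}"
    using j unfolding Dl_def by auto
  have "(S j (i, t), S j (i, \<not> t)) \<in> Q \<or> (S j (i, \<not> t), S j (i, t)) \<in> Q"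
    using S_S_in_QI[OF i j j] unfolding Q_def pos_def ng_def by (cases t) auto
  then have splits: "(A i, B) \<in> Q" "(D j p, B) \<in> Q" "(D j q, B) \<in> Q"
    "(H (i, t), F j) \<in> Q" "(H (i, \<not> t), F j) \<in> Q"
    "(S j (i, t), S j (i, \<not> t)) \<in> Q \<or> (S j (i, \<not> t), S j (i, t)) \<in> Q"
    "(K cl j (i, \<not> t), K cl j (i, t)) \<in> Q" "(K cl j (i, \<not> t), L cl j (i, t)) \<in> Q"
    using A_B_in_QI[OF i] D_B_in_QI[OF jm] H_F_in_QI[OF _ jm] clause_splits_in_QI[OF jm]
      occ(3,4,9,10) i
    unfolding Q_def by auto
  then have cells: "B \<in> vtx Q" "A i \<in> vtx Q" "D j p \<in> vtx Q" "D j q \<in> vtx Q" "F j \<in> vtx Q"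
    "H (i, t) \<in> vtx Q" "H (i, \<not> t) \<in> vtx Q" "S j (i, t) \<in> vtx Q" "S j (i, \<not> t) \<in> vtx Q"
    "K cl j (i, t) \<in> vtx Q" "K cl j (i, \<not> t) \<in> vtx Q" "L cl j (i, t) \<in> vtx Q"
    using split_cells_in_vtx by blast+
  have A_eq: "A i = {EAlpha (i, t), EAlpha (i, \<not> t)}"
    unfolding A_def pos_def ng_def by (cases t) auto
  note cells_def = B_def F_def D_def A_eq H_def S_def occ(6-8)
  have chordal: "chordal (vtx Q) G"
    using sandwich unfolding Q_def chordal_sandwich_def by blast
  note adjacent = sandwich_adjacent[OF sandwich[folded Q_def]]
    and not_adjacent = sandwich_not_adjacent[OF sandwich[folded Q_def]]
  have "clause_gadget (vtx Q) G B (F j) (D j p) (D j q) (A i) (H (i, t)) (H (i, \<not> t))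
       (S j (i, t)) (S j (i, \<not> t)) (K cl j (i, t)) (K cl j (i, \<not> t)) (L cl j (i, t))"
  proof unfold_locales
    show "chordal (vtx Q) G"
      by (fact chordal)
    show "{B, F j, D j p, D j q, A i, H (i, t), H (i, \<not> t), S j (i, t), S j (i, \<not> t),
        K cl j (i, t), K cl j (i, \<not> t), L cl j (i, t)} \<subseteq> vtx Q"
      using cells by simp
    show "distinct [B, F j, D j p, D j q, A i, H (i, t), H (i, \<not> t), S j (i, t), S j (i, \<not> t),
        K cl j (i, t), K cl j (i, \<not> t), L cl j (i, t)]"
      using occ(5) by (simp add: cells_def doubleton_eq_iff)
  qed (rule adjacent not_adjacent;
      simp add: cells[unfolded cells_def] splits[unfolded cells_def] cells_def doubleton_eq_iff)+
  then show ?thesis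
    unfolding Q_def by (rule that[OF occ(1,2)])
qed

lemma literal_cases:
  assumes "W \<in> {pos i, ng i}" obtains "W = (i, t)" | "W = (i, \<not> t)"
  using assms unfolding pos_def ng_def by (cases t) auto

lemma S_neg_B_if_not_K_B:
  assumes wf: "wf_instance n m cl"
    and sandwich: "chordal_sandwich (vtx (QI n m cl)) (int_star (QI n m cl)) (forb (QI n m cl)) G"
    and i: "i \<in> {1..n}" and j: "j \<in> Dl m cl i"
    and W: "W \<in> {pos i, ng i}" and not_KB: "(K cl j W, B) \<notin> G"
  shows "(S j (neg W), B) \<in> G"
proof -
  obtain t p q where gadget: "clause_gadget (vtx (QI n m cl)) G B (F j) (D j p) (D j q) (A i)
      (H (i, t)) (H (i, \<not> t)) (S j (i, t)) (S j (i, \<not> t))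
      (K cl j (i, t)) (K cl j (i, \<not> t)) (L cl j (i, t))"
    using clause_gadget_at[OF wf sandwich i j] by blast
  from W show ?thesis
  proof (cases rule: literal_cases[of _ _ t])
    case 1
    then show ?thesis
      using clause_gadget.s'_b_if_not_k_b[OF gadget] not_KB by (simp add: neg_def)
  next
    case 2
    then show ?thesis
      using clause_gadget.s_b_if_not_k'_b[OF gadget] not_KB by (simp add: neg_def)
  qed
qed

lemma neighbours_if_K_B:
  assumes wf: "wf_instance n m cl"
    and sandwich: "chordal_sandwich (vtx (QI n m cl)) (int_star (QI n m cl)) (forb (QI n m cl)) G"
    and i: "i \<in> {1..n}" and j: "j \<in> Dl m cl i"
    and W: "W \<in> {pos i, ng i}" and KB: "(K cl j W, B) \<in> G"
  shows "\<forall>P \<in> {S j W, K cl j W} \<union> (if in_clause cl j W then {L cl j W} else {}).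
           \<forall>R \<in> {B, A i, H W, H (neg W), F j}. (P, R) \<in> G"
proof -
  obtain t p q where occurs: "in_clause cl j (i, t)" "\<not> in_clause cl j (i, \<not> t)"
    and gadget: "clause_gadget (vtx (QI n m cl)) G B (F j) (D j p) (D j q) (A i)
      (H (i, t)) (H (i, \<not> t)) (S j (i, t)) (S j (i, \<not> t))
      (K cl j (i, t)) (K cl j (i, \<not> t)) (L cl j (i, t))"
    using clause_gadget_at[OF wf sandwich i j] by blast
  from W show ?thesis
  proof (cases rule: literal_cases[of _ _ t])
    case 1
    then show ?thesis
      using clause_gadget.neighbours_if_k_b[OF gadget] KB occurs by (simp add: neg_def)
  next
    case 2
    then show ?thesis
      using clause_gadget.neighbours_if_k'_b[OF gadget] KB occurs by (simp add: neg_def)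
  qed
qed

lemma S_pos_B_excludes_S_ng_B:
  assumes sandwich: "chordal_sandwich (vtx (QI n m cl)) (int_star (QI n m cl)) (forb (QI n m cl)) G"
    and i: "i \<in> {1..n}" and j: "j \<in> Dl m cl i" and j': "j' \<in> Dl m cl i"
    and SB: "(S j (pos i), B) \<in> G"
  shows "(S j' (ng i), B) \<notin> G"
proof
  assume S'B: "(S j' (ng i), B) \<in> G"
  let ?Q = "QI n m cl"
  have chordal: "chordal (vtx ?Q) G"
    using sandwich by (simp add: chordal_sandwich_def)
  then have "(B, S j' (ng i)) \<in> G"
    using S'B unfolding chordal_def graph_on_def by (auto dest: symD)
  have splits: "(A i, B) \<in> ?Q" "(S j (pos i), S j' (ng i)) \<in> ?Q"
    using A_B_in_QI[OF i] S_S_in_QI[OF i j j'] .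
  then have cells: "A i \<in> vtx ?Q" "B \<in> vtx ?Q" "S j (pos i) \<in> vtx ?Q" "S j' (ng i) \<in> vtx ?Q"
    using split_cells_in_vtx by blast+
  note cells_def = A_def B_def S_def pos_def ng_def
  have "(A i, S j (pos i)) \<in> G" "(A i, S j' (ng i)) \<in> G"
    using sandwich_adjacent[OF sandwich] cells by (simp_all add: cells_def doubleton_eq_iff)
  moreover have "(A i, B) \<notin> G" "(S j (pos i), S j' (ng i)) \<notin> G"
    using sandwich_not_adjacent[OF sandwich] splits by blast+
  moreover have "(S j (pos i), S j' (ng i)) \<in> G"
    by (rule chordal_adjacent_if_path_avoids_neighbourhood[OF chordal, of "A i" _ _ "[B]"])
      (use calculation SB \<open>(B, S j' (ng i)) \<in> G\<close> cells
        in \<open>simp_all add: cells_def doubleton_eq_iff\<close>)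
  ultimately show False
    by blast
qed

theorem lemma7:
  fixes n m i :: nat and cl :: clauses and G :: "(elem set \<times> elem set) set"
  assumes wf: "wf_instance n m cl"
    and sw: "chordal_sandwich (vtx (QI n m cl)) (int_star (QI n m cl)) (forb (QI n m cl)) G"
    and i: "1 \<le> i" "i \<le> n"
  shows "(\<exists>W \<in> {pos i, ng i}. \<forall>j \<in> Dl m cl i. (K cl j W, B) \<in> G)
       \<and> (\<forall>j \<in> Dl m cl i. \<forall>W \<in> {pos i, ng i}. (K cl j W, B) \<in> G \<longrightarrow>
            (\<forall>P \<in> {S j W, K cl j W} \<union> (if in_clause cl j W then {L cl j W} else {}).
               \<forall>R \<in> {B, A i, H W, H (neg W), F j}. (P, R) \<in> G))"
proof
  have i: "i \<in> {1..n}"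
    using i by simp
  show "\<exists>W \<in> {pos i, ng i}. \<forall>j \<in> Dl m cl i. (K cl j W, B) \<in> G"
  proof (rule ccontr)
    assume "\<not> ?thesis"
    then obtain j j' where j: "j \<in> Dl m cl i" "(K cl j (ng i), B) \<notin> G"
      and j': "j' \<in> Dl m cl i" "(K cl j' (pos i), B) \<notin> G"
      by blast
    have "(S j (pos i), B) \<in> G" "(S j' (ng i), B) \<in> G"
      using S_neg_B_if_not_K_B[OF wf sw i j(1) _ j(2)] S_neg_B_if_not_K_B[OF wf sw i j'(1) _ j'(2)]
      by (simp_all add: neg_def pos_def ng_def)
    then show False
      using S_pos_B_excludes_S_ng_B[OF sw i j(1) j'(1)] by blast
  qed
  show "\<forall>j \<in> Dl m cl i. \<forall>W \<in> {pos i, ng i}. (K cl j W, B) \<in> G \<longrightarrow>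
      (\<forall>P \<in> {S j W, K cl j W} \<union> (if in_clause cl j W then {L cl j W} else {}).
         \<forall>R \<in> {B, A i, H W, H (neg W), F j}. (P, R) \<in> G)"
    using neighbours_if_K_B[OF wf sw i] by blast
qed

end
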